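(* Let $1\le k\le n$. For every state $q\in S_k$, there is a wait-free implementation of a consensus object for $k$ processes from one token object $T_q$ (the ERC20 token object initialized in state $q$) together with atomic read/write registers. Consequently $\mathcal{CN}(T_{S_k})\ge k$.
   Context: Asynchronous shared-memory model with crash failures; processes are sequential and communicate through shared objects; an implementation is wait-free if every operation invoked by a correct process terminates regardless of crashes of other processes. A consensus object offers a single-shot operation $\mathrm{propose}(v)$ returning a decided value; it must satisfy termination (wait-freedom), validity (the decided value was proposed by some process) and agreement (all processes decide the same value). The consensus number $\mathcal{CN}(O)$ of an object type $O$ is the largest $m$ such that consensus among $m$ processes can be wait-free implemented from atomic registers and objects of type $O$ (infinite if there is no largest). For a set of states $Q'$, $T_{Q'}$ denotes the token object initialized in some state of $Q'$; $\mathcal{CN}(T_{Q'})\ge k$ means that from any such initial state consensus among $k$ processes can be implemented. ERC20 token object. There are $n$ processes $\Pi=\{p_1,\dots,p_n\}$ and $n$ accounts $\mathcal A=\{a_1,\dots,a_n\}$, with owner bijection $\omega(a_i)=p_i$; $a_p$ denotes the account owned by $p$. States are pairs $q=(\beta,\alpha)$ with balances $\beta:\mathcal A\to\mathbb N$ and allowances $\alpha:\mathcal A\times\Pi\to\mathbb N$. Operations invoked by process $p$ (sequential specification): $\mathrm{transfer}(a_d,v)$: if $\beta(a_p)\ge v$, move $v$ from $a_p$ to $a_d$ and return true, else leave the state unchanged and return false; $\mathrm{approve}(\bar p,v)$: set $\alpha(a_p,\bar p)=v$ (all else unchanged), return true; $\mathrm{transferFrom}(a_s,a_d,v)$: if $\beta(a_s)\ge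 v$ and $\alpha(a_s,p)\ge v$, decrease $\beta(a_s)$ and $\alpha(a_s,p)$ by $v$, increase $\beta(a_d)$ by $v$, return true, else leave the state unchanged and return false; $\mathrm{balanceOf}(a)$ returns $\beta(a)$; $\mathrm{totalSupply}$ returns $\sum_a\beta(a)$; $\mathrm{allowances}(a,\bar p)$ returns $\alpha(a,\bar p)$ (read-only). $T_q$ is this object initialized in state $q$. Enabled spenders: for $q=(\beta,\alpha)$ and $a\in\mathcal A$, $\sigma_q(a)=\{p\in\Pi: p=\omega(a)\ \lor\ \alpha(a,p)>0\}$, with the convention that if $\beta(a)=0$ then $\sigma_q(a)=\{\omega(a)\}$. Predicate $\mathrm{UT}(a,q)$ holds iff $\beta(a)>0$ and (either $|\sigma_q(a)|\le 2$, or for all $p_i,p_j\in\sigma_q(a)\setminus\{\omega(a)\}$: $\alpha(a,p_i)+\alpha(a,p_j)>\beta(a)$). The set of $k$-synchronization states is $S_k=\{q: \exists a\in\mathcal A,\ |\sigma_q(a)|=k \land \mathrm{UT}(a,q)\}$. *)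

theory Defs
  imports Main
begin

text \<open>Processes are p_0..p_(n-1) (naturals below n), accounts a_0..a_(n-1)
  (naturals below n), and the owner of account a_i is process p_i, i.e. the
  owner bijection is the identity on indices.  A token state is a pair
  (beta, alpha) of balances beta a and allowances alpha a p.
  Values of beta/alpha outside the index range are irrelevant.\<close>

type_synonym tstate = "(nat \<Rightarrow> nat) \<times> (nat \<Rightarrow> nat \<Rightarrow> nat)"

definition bal :: "tstate \<Rightarrow> nat \<Rightarrow> nat" where "bal q = fst q"
definition allw :: "tstate \<Rightarrow> nat \<Rightarrow> nat \<Rightarrow> nat" where "allw q = snd q"

definition sigma :: "nat \<Rightarrow> tstate \<Rightarrow> nat \<Rightarrow> nat set" where
  "sigma n q a = (if bal q a = 0 then {a}
                  else {p. p < n \<and> (p = a \<or> allw q a p > 0)})"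

definition UT :: "nat \<Rightarrow> nat \<Rightarrow> tstate \<Rightarrow> bool" where
  "UT n a q \<longleftrightarrow> bal q a > 0 \<and>
     (card (sigma n q a) \<le> 2 \<or>
      (\<forall>pi \<in> sigma n q a - {a}. \<forall>pj \<in> sigma n q a - {a}.
          pi \<noteq> pj \<longrightarrow> allw q a pi + allw q a pj > bal q a))"

definition S :: "nat \<Rightarrow> nat \<Rightarrow> tstate set" where
  "S n k = {q. \<exists>a<n. card (sigma n q a) = k \<and> UT n a q}"

datatype 'v op =
    Transfer nat nat            \<comment> \<open>transfer(a_d, v)\<close>
  | Approve nat nat             \<comment> \<open>approve(p, v)\<close>
  | TransferFrom nat nat nat    \<comment> \<open>transferFrom(a_s, a_d, v)\<close>
  | BalanceOf nat
  | TotalSupply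
  | Allowance nat nat           \<comment> \<open>allowances(a, p)\<close>
  | RegRead nat
  | RegWrite nat "'v option"

datatype 'v resp = RBool bool | RNat nat | RVal "'v option" | RAck

datatype 'v action = Invoke "'v op" | Decide 'v

type_synonym 'v regs = "nat \<Rightarrow> 'v option"

text \<open>Atomic effect of an operation invoked by process p (sequential specification).
  Arguments outside the index range are treated as failing no-ops.\<close>
fun apply_op :: "nat \<Rightarrow> nat \<Rightarrow> 'v op \<Rightarrow> tstate \<times> 'v regs \<Rightarrow> (tstate \<times> 'v regs) \<times> 'v resp" where
  "apply_op n p (Transfer d v) ((b, al), R) =
     (if d < n \<and> v \<le> b p then
        (let b1 = b(p := b p - v) in (((b1(d := b1 d + v), al), R), RBool True))
      else (((b, al), R), RBool False))"
| "apply_op n p (Approve pb v) ((b, al), R) =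
     (if pb < n then (((b, al(p := (al p)(pb := v))), R), RBool True)
      else (((b, al), R), RBool False))"
| "apply_op n p (TransferFrom s d v) ((b, al), R) =
     (if s < n \<and> d < n \<and> v \<le> b s \<and> v \<le> al s p then
        (let b1 = b(s := b s - v) in
          (((b1(d := b1 d + v), al(s := (al s)(p := al s p - v))), R), RBool True))
      else (((b, al), R), RBool False))"
| "apply_op n p (BalanceOf a) ((b, al), R) =
     (((b, al), R), RNat (if a < n then b a else 0))"
| "apply_op n p TotalSupply ((b, al), R) =
     (((b, al), R), RNat (\<Sum>a<n. b a))"
| "apply_op n p (Allowance a pb) ((b, al), R) =
     (((b, al), R), RNat (if a < n \<and> pb < n then al a pb else 0))"
| "apply_op n p (RegRead i) (q, R) = ((q, R), RVal (R i))"
| "apply_op n p (RegWrite i x) (q, R) = ((q, R(i := x)), RAck)"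

text \<open>A (deterministic) algorithm: the next action of process p depends on its
  proposal and on the list of responses it has received so far (its local history).\<close>
type_synonym 'v prog = "nat \<Rightarrow> 'v \<Rightarrow> 'v resp list \<Rightarrow> 'v action"

type_synonym 'v config = "tstate \<times> 'v regs \<times> (nat \<Rightarrow> 'v resp list)"

fun step :: "nat \<Rightarrow> 'v prog \<Rightarrow> (nat \<Rightarrow> 'v) \<Rightarrow> nat \<Rightarrow> 'v config \<Rightarrow> 'v config" where
  "step n pr inp p (q, R, h) =
     (case pr p (inp p) (h p) of
        Decide v \<Rightarrow> (q, R, h)
      | Invoke oper \<Rightarrow> (case apply_op n p oper (q, R) of
                      ((q', R'), r) \<Rightarrow> (q', R', h(p := h p @ [r]))))"

text \<open>Execution from token state q0 (registers initially empty) under the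
  schedule s (s t is the process taking step t).\<close>
fun run :: "nat \<Rightarrow> 'v prog \<Rightarrow> tstate \<Rightarrow> (nat \<Rightarrow> 'v) \<Rightarrow> (nat \<Rightarrow> nat) \<Rightarrow> nat \<Rightarrow> 'v config" where
  "run n pr q0 inp s 0 = (q0, (\<lambda>_. None), (\<lambda>_. []))"
| "run n pr q0 inp s (Suc t) = step n pr inp (s t) (run n pr q0 inp s t)"

text \<open>Process p has (invoked propose and) decided v by time t.\<close>
definition decided :: "nat \<Rightarrow> 'v prog \<Rightarrow> tstate \<Rightarrow> (nat \<Rightarrow> 'v) \<Rightarrow> (nat \<Rightarrow> nat) \<Rightarrow> nat \<Rightarrow> nat \<Rightarrow> 'v \<Rightarrow> bool" where
  "decided n pr q0 inp s t p v \<longleftrightarrow>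
     (\<exists>t'<t. s t' = p) \<and>
     pr p (inp p) (snd (snd (run n pr q0 inp s t)) p) = Decide v"

text \<open>Every schedule is an
  infinite sequence of steps of processes in P; processes taking finitely many
  steps are the crashed ones.\<close>
definition consensus_impl :: "nat \<Rightarrow> tstate \<Rightarrow> nat set \<Rightarrow> 'v prog \<Rightarrow> bool" where
  "consensus_impl n q0 P pr \<longleftrightarrow>
    (\<forall>inp s. (\<forall>t. s t \<in> P) \<longrightarrow>
       \<comment> \<open>termination (wait-freedom): every correct process decides\<close>
       (\<forall>p\<in>P. (\<forall>m. \<exists>t\<ge>m. s t = p) \<longrightarrow> (\<exists>t v. decided n pr q0 inp s t p v))
     \<and> \<comment> \<open>validity\<close>
       (\<forall>t p v. decided n pr q0 inp s t p v \<longrightarrow>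
           (\<exists>p'\<in>P. (\<exists>t'<t. s t' = p') \<and> v = inp p'))
     \<and> \<comment> \<open>agreement\<close>
       (\<forall>t p1 p2 v1 v2. decided n pr q0 inp s t p1 v1 \<and> decided n pr q0 inp s t p2 v2
           \<longrightarrow> v1 = v2))"

definition consensus_implementable :: "'v itself \<Rightarrow> nat \<Rightarrow> tstate \<Rightarrow> nat \<Rightarrow> bool" where
  "consensus_implementable _ n q k \<longleftrightarrow>
     (\<exists>P (pr :: 'v prog). P \<subseteq> {..<n} \<and> card P = k \<and> consensus_impl n q P pr)"

definition CN_ge :: "'v itself \<Rightarrow> nat \<Rightarrow> tstate set \<Rightarrow> nat \<Rightarrow> bool" where
  "CN_ge vt n Q k \<longleftrightarrow> (\<forall>q\<in>Q. consensus_implementable vt n q k)"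

end

theory Submission
  imports Defs
begin

(* Fix an account a witnessing q \<in> S n k; its k enabled spenders run the protocol.
   Each process first announces its proposal in its own register and then tries once
   to empty the account: the owner transfers the whole balance away, any other spender
   withdraws min(allowance, balance).  The condition UT guarantees that whichever of
   these operations is applied first succeeds and makes all the others fail, so there
   is exactly one winner, who decides its own proposal.  A loser identifies the winner
   by reading the allowances of a (only the winner's allowance has changed, and none
   has if the owner won) and adopts the proposal announced in the winner's register. *)

definition history ::
    "nat \<Rightarrow> 'v prog \<Rightarrow> tstate \<Rightarrow> (nat \<Rightarrow> 'v) \<Rightarrow> (nat \<Rightarrow> nat) \<Rightarrow> nat \<Rightarrow> nat \<Rightarrow> 'v resp list" where
  "history n pr q0 inp s t p = snd (snd (run n pr q0 inp s t)) p"

lemma decided_iff_history: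
  "decided n pr q0 inp s t p v \<longleftrightarrow>
     (\<exists>t'<t. s t' = p) \<and> pr p (inp p) (history n pr q0 inp s t p) = Decide v"
  by (simp add: decided_def history_def)

lemma step_Decide: "pr p (inp p) (snd (snd c) p) = Decide v \<Longrightarrow> step n pr inp p c = c"
  by (cases c) auto

lemma history_Suc_other: "s t \<noteq> p \<Longrightarrow> history n pr q0 inp s (Suc t) p = history n pr q0 inp s t p"
  by (cases "run n pr q0 inp s t") (auto simp: history_def split: action.split prod.split)

lemma history_Suc_Decide:
  assumes "pr p (inp p) (history n pr q0 inp s t p) = Decide v"
  shows "history n pr q0 inp s (Suc t) p = history n pr q0 inp s t p"
proof (cases "s t = p")
  case True
  with assms show ?thesis by (simp add: history_def step_Decide)
qed (simp add: history_Suc_other)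

lemma history_Suc_Invoke:
  "s t = p \<Longrightarrow> pr p (inp p) (history n pr q0 inp s t p) = Invoke oper \<Longrightarrow>
   \<exists>r. history n pr q0 inp s (Suc t) p = history n pr q0 inp s t p @ [r]"
  by (cases "run n pr q0 inp s t") (auto simp: history_def split: prod.split)

lemma history_length_mono:
  assumes "t \<le> t'"
  shows "length (history n pr q0 inp s t p) \<le> length (history n pr q0 inp s t' p)"
  using assms
proof (induction t' rule: dec_induct)
  case (step t')
  have "length (history n pr q0 inp s t' p) \<le> length (history n pr q0 inp s (Suc t') p)"
  proof (cases "pr p (inp p) (history n pr q0 inp s t' p)")
    case (Invoke oper)
    show ?thesis
    proof (cases "s t' = p")
      case True
      with Invoke obtain r
        where "history n pr q0 inp s (Suc t') p = history n pr q0 inp s t' p @ [r]"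
        using history_Suc_Invoke[where pr = pr and inp = inp] by blast
      then show ?thesis by simp
    qed (simp add: history_Suc_other)
  qed (simp add: history_Suc_Decide)
  with step.IH show ?case by linarith
qed simp

lemma history_nonempty_scheduled: "history n pr q0 inp s t p \<noteq> [] \<Longrightarrow> \<exists>t'<t. s t' = p"
proof (induction t)
  case (Suc t)
  then show ?case by (cases "s t = p") (auto simp: history_Suc_other less_Suc_eq)
qed (simp add: history_def)

lemma decides_if_bounded_history:
  assumes bounded: "\<And>x h. L \<le> length h \<Longrightarrow> \<exists>v. pr p x h = Decide v"
    and fair: "\<forall>m. \<exists>t\<ge>m. s t = p"
  shows "\<exists>t v. decided n pr q0 inp s t p v"
proof -
  let ?H = "history n pr q0 inp s"
  define D where "D t \<longleftrightarrow> (\<exists>v. pr p (inp p) (?H t p) = Decide v)" for t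
  have D_mono: "D t'" if "D t" "t \<le> t'" for t t'
    using that(2,1) by (induction t' rule: dec_induct) (auto simp: D_def history_Suc_Decide)
  have progress: "\<exists>t. D t \<or> N \<le> length (?H t p)" for N
  proof (induction N)
    case (Suc N)
    then obtain t where t: "D t \<or> N \<le> length (?H t p)" by blast
    obtain t' where t': "t \<le> t'" "s t' = p" using fair by blast
    have "D t' \<or> N \<le> length (?H t' p)"
      using t D_mono[OF _ t'(1)] history_length_mono[OF t'(1), of n pr q0 inp s p] by linarith
    moreover have "Suc N \<le> length (?H (Suc t') p)" if "\<not> D t'" "N \<le> length (?H t' p)"
    proof -
      obtain oper where "pr p (inp p) (?H t' p) = Invoke oper"
        using \<open>\<not> D t'\<close> by (cases "pr p (inp p) (?H t' p)") (auto simp: D_def)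
      with t'(2) obtain r where "?H (Suc t') p = ?H t' p @ [r]"
        using history_Suc_Invoke[where pr = pr and inp = inp] by blast
      with that(2) show ?thesis by simp
    qed
    ultimately show ?case by blast
  qed simp
  obtain t where "D t" using progress[of L] bounded unfolding D_def by blast
  moreover obtain t' where "t \<le> t'" "s t' = p" using fair by blast
  ultimately have "D (Suc t')" using D_mono by simp
  with \<open>s t' = p\<close> show ?thesis by (auto simp: D_def decided_iff_history)
qed

locale token_consensus =
  fixes n a :: nat and \<beta> :: "nat \<Rightarrow> nat" and \<alpha> :: "nat \<Rightarrow> nat \<Rightarrow> nat"
  assumes account_lt: "a < n" and balance_pos: "0 < \<beta> a" and two_le_n: "2 \<le> n"
    and allowances_exceed_balance: "\<And>p p'. \<lbrakk>p < n; p' < n; 0 < \<alpha> a p; 0 < \<alpha> a p';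
      p \<noteq> a; p' \<noteq> a; p \<noteq> p'\<rbrakk> \<Longrightarrow> \<beta> a < \<alpha> a p + \<alpha> a p'"
begin

definition spenders :: "nat set" where
  "spenders = {p. p < n \<and> (p = a \<or> 0 < \<alpha> a p)}"

(* A self-transfer by the owner would leave the balance of a intact. *)
definition sink :: nat where
  "sink = (if a = 0 then 1 else 0)"

definition withdrawal :: "nat \<Rightarrow> nat" where
  "withdrawal p = min (\<alpha> a p) (\<beta> a)"

definition token_op :: "nat \<Rightarrow> 'v op" where
  "token_op p = (if p = a then Transfer sink (\<beta> a) else TransferFrom a p (withdrawal p))"

definition state_after_win :: "nat \<Rightarrow> tstate" where
  "state_after_win p = (if p = a then (\<beta>(a := 0, sink := \<beta> sink + \<beta> a), \<alpha>)
     else (\<beta>(a := \<beta> a - withdrawal p, p := \<beta> p + withdrawal p),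
           \<alpha>(a := (\<alpha> a)(p := \<alpha> a p - withdrawal p))))"

lemma sink_ne_account: "sink \<noteq> a" and sink_lt: "sink < n"
  using two_le_n by (auto simp: sink_def)

lemma withdrawal_pos: "p \<in> spenders \<Longrightarrow> p \<noteq> a \<Longrightarrow> 0 < withdrawal p"
  using balance_pos by (auto simp: spenders_def withdrawal_def)

lemma withdrawal_le: "withdrawal p \<le> \<alpha> a p" "withdrawal p \<le> \<beta> a"
  by (auto simp: withdrawal_def)

lemma withdrawals_exceed_balance:
  "\<lbrakk>p \<in> spenders; p' \<in> spenders; p \<noteq> a; p' \<noteq> a; p \<noteq> p'\<rbrakk> \<Longrightarrow> \<beta> a < withdrawal p + withdrawal p'"
  using allowances_exceed_balance[of p p'] balance_pos by (auto simp: spenders_def withdrawal_def)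

lemma token_op_succeeds:
  assumes "p \<in> spenders"
  shows "apply_op n p (token_op p) ((\<beta>, \<alpha>), R) = ((state_after_win p, R), RBool True)"
  using assms account_lt withdrawal_le sink_ne_account sink_lt
  by (auto simp: token_op_def state_after_win_def Let_def spenders_def)

lemma token_op_fails:
  assumes "w \<in> spenders" "p \<in> spenders" "p \<noteq> w"
  shows "apply_op n p (token_op p) (state_after_win w, R) = ((state_after_win w, R), RBool False)"
proof -
  consider "p = a" | "w = a" | "p \<noteq> a" "w \<noteq> a" by blast
  then show ?thesis
  proof cases
    case 1
    with assms withdrawal_pos[of w] withdrawal_le(2)[of w] sink_ne_account balance_pos show ?thesis
      by (auto simp: token_op_def state_after_win_def Let_def)
  next
    case 2
    with assms withdrawal_pos[of p] sink_ne_account show ?thesis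
      by (auto simp: token_op_def state_after_win_def Let_def)
  next
    case 3
    with assms withdrawals_exceed_balance[of p w] withdrawal_le(2)[of w] show ?thesis
      by (auto simp: token_op_def state_after_win_def Let_def)
  qed
qed

lemma allowance_state_after_win:
  "w \<in> spenders \<Longrightarrow> j \<noteq> a \<Longrightarrow> allw (state_after_win w) a j = \<alpha> a j \<longleftrightarrow> w = a \<or> j \<noteq> w"
  using withdrawal_pos[of w] withdrawal_le[of w] by (auto simp: state_after_win_def allw_def)

(* In a history h of the protocol, h ! 0 acknowledges the announcement, h ! 1 is the
   result of the token operation, h ! (2 + j) is the allowance of j on a (j < n) and
   h ! (2 + n) is the content of the winner's register. *)

definition allowance_changed :: "'v resp list \<Rightarrow> nat \<Rightarrow> bool" where
  "allowance_changed h j \<longleftrightarrow> j < n \<and> j \<noteq> a \<and> h ! (2 + j) \<noteq> RNat (\<alpha> a j)"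

definition winner :: "'v resp list \<Rightarrow> nat" where
  "winner h = (if \<exists>j. allowance_changed h j then LEAST j. allowance_changed h j else a)"

definition protocol :: "'v prog" where
  "protocol p x h =
    (if length h = 0 then Invoke (RegWrite p (Some x))
     else if length h = 1 then Invoke (token_op p)
     else if h ! 1 = RBool True then Decide x
     else if length h < 2 + n then Invoke (Allowance a (length h - 2))
     else if length h = 2 + n then Invoke (RegRead (winner h))
     else Decide (case h ! (2 + n) of RVal (Some v) \<Rightarrow> v | _ \<Rightarrow> x))"

lemma winner_eq:
  assumes "w \<in> spenders" "\<forall>j<n. h ! (2 + j) = RNat (allw (state_after_win w) a j)"
  shows "winner h = w"
proof -
  have changed: "allowance_changed h = (\<lambda>j. w \<noteq> a \<and> j = w)"
  proof
    fix j
    show "allowance_changed h j \<longleftrightarrow> w \<noteq> a \<and> j = w"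
      using assms allowance_state_after_win[OF assms(1), of j]
      by (auto simp: allowance_changed_def spenders_def)
  qed
  show ?thesis
    by (cases "w = a") (simp_all add: winner_def changed Least_equality)
qed

lemma protocol_Nil: "protocol p x [] = Invoke (RegWrite p (Some x))"
  by (simp add: protocol_def)

lemma protocol_token_op: "length h = 1 \<Longrightarrow> protocol p x h = Invoke (token_op p)"
  by (simp add: protocol_def)

lemma protocol_winner: "2 \<le> length h \<Longrightarrow> h ! 1 = RBool True \<Longrightarrow> protocol p x h = Decide x"
  by (auto simp: protocol_def)

lemma protocol_Invoke_short: "length h \<le> 1 \<Longrightarrow> \<exists>oper. protocol p x h = Invoke oper"
  by (auto simp: protocol_def le_Suc_eq)

lemma protocol_Invoke_losing:
  "2 \<le> length h \<Longrightarrow> length h \<le> 2 + n \<Longrightarrow> h ! 1 \<noteq> RBool True \<Longrightarrow>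
   \<exists>oper. protocol p x h = Invoke oper"
  by (auto simp: protocol_def)

lemma protocol_Decide_losing:
  "2 + n < length h \<Longrightarrow> h ! 1 \<noteq> RBool True \<Longrightarrow>
   protocol p x h = Decide (case h ! (2 + n) of RVal (Some v) \<Rightarrow> v | _ \<Rightarrow> x)"
  by (auto simp: protocol_def)

lemma protocol_Decide_long: "3 + n \<le> length h \<Longrightarrow> \<exists>v. protocol p x h = Decide v"
  by (auto simp: protocol_def)

lemma apply_Allowance:
  "j < n \<Longrightarrow> apply_op n p (Allowance a j) (q, R) = ((q, R), RNat (allw q a j))"
  using account_lt by (cases q) (simp add: allw_def)

definition loser_history :: "(nat \<Rightarrow> 'v) \<Rightarrow> nat \<Rightarrow> 'v resp list \<Rightarrow> bool" where
  "loser_history inp w hp \<longleftrightarrow> hp ! 1 = RBool False \<and>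
     (\<forall>j<n. 2 + j < length hp \<longrightarrow> hp ! (2 + j) = RNat (allw (state_after_win w) a j)) \<and>
     (2 + n < length hp \<longrightarrow> hp ! (2 + n) = RVal (Some (inp w)))"

definition won_by :: "(nat \<Rightarrow> 'v) \<Rightarrow> nat \<Rightarrow> tstate \<Rightarrow> (nat \<Rightarrow> 'v resp list) \<Rightarrow> bool" where
  "won_by inp w q h \<longleftrightarrow> w \<in> spenders \<and> q = state_after_win w \<and>
     2 \<le> length (h w) \<and> h w ! 1 = RBool True \<and>
     (\<forall>p\<in>spenders - {w}. 2 \<le> length (h p) \<longrightarrow> loser_history inp w (h p))"

fun protocol_inv :: "(nat \<Rightarrow> 'v) \<Rightarrow> 'v config \<Rightarrow> bool" where
  "protocol_inv inp (q, R, h) \<longleftrightarrow>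
     (\<forall>p\<in>spenders. h p \<noteq> [] \<longrightarrow> R p = Some (inp p)) \<and>
     ((q = (\<beta>, \<alpha>) \<and> (\<forall>p\<in>spenders. length (h p) \<le> 1)) \<or> (\<exists>w. won_by inp w q h))"

lemma loser_history_snoc:
  assumes "loser_history inp w hp" "2 \<le> length hp"
    and "length hp < 2 + n \<Longrightarrow> r = RNat (allw (state_after_win w) a (length hp - 2))"
    and "length hp = 2 + n \<Longrightarrow> r = RVal (Some (inp w))"
  shows "loser_history inp w (hp @ [r])"
proof -
  have "(hp @ [r]) ! (2 + j) = RNat (allw (state_after_win w) a j)"
    if "j < n" "2 + j < length (hp @ [r])" for j
  proof (cases "2 + j < length hp")
    case False
    with that have "length hp = 2 + j" by simp
    with assms(3) \<open>j < n\<close> show ?thesis by (simp add: nth_append)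
  qed (use assms(1) that in \<open>simp add: loser_history_def nth_append\<close>)
  moreover have "(hp @ [r]) ! (2 + n) = RVal (Some (inp w))" if "2 + n < length (hp @ [r])"
    using assms(1,4) that by (cases "2 + n < length hp") (auto simp: loser_history_def nth_append)
  ultimately show ?thesis using assms(1,2) by (simp add: loser_history_def nth_append)
qed

lemma won_by_update:
  "won_by inp w q h \<Longrightarrow> p \<noteq> w \<Longrightarrow> (2 \<le> length hp \<longrightarrow> loser_history inp w hp) \<Longrightarrow>
   won_by inp w q (h(p := hp))"
  by (auto simp: won_by_def)

lemma step_loser:
  assumes won: "won_by inp w q h" and p: "p \<in> spenders" "p \<noteq> w" "2 \<le> length (h p)"
    and reg: "R w = Some (inp w)"
  shows "\<exists>hp. step n protocol inp p (q, R, h) = (q, R, h(p := hp)) \<and>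
    2 \<le> length hp \<and> loser_history inp w hp"
proof -
  have q: "q = state_after_win w" and w: "w \<in> spenders" using won by (auto simp: won_by_def)
  have L: "loser_history inp w (h p)" using won p by (auto simp: won_by_def)
  then have lost: "h p ! 1 = RBool False" by (simp add: loser_history_def)
  have nonempty: "length (h p) \<noteq> 0" "length (h p) \<noteq> 1" using p(3) by auto
  consider "length (h p) < 2 + n" | "length (h p) = 2 + n" | "2 + n < length (h p)" by linarith
  then show ?thesis
  proof cases
    case 1
    let ?r = "RNat (allw q a (length (h p) - 2))"
    have "apply_op n p (Allowance a (length (h p) - 2)) (q, R) = ((q, R), ?r)"
      by (rule apply_Allowance) (use 1 p(3) in linarith)
    then have "step n protocol inp p (q, R, h) = (q, R, h(p := h p @ [?r]))"
      using 1 nonempty lost by (simp add: protocol_def)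
    moreover have "loser_history inp w (h p @ [?r])"
      using L p(3) 1 q by (intro loser_history_snoc) auto
    ultimately show ?thesis using p(3) by fastforce
  next
    case 2
    have "winner (h p) = w" using winner_eq[OF w] L 2 by (auto simp: loser_history_def)
    then have "step n protocol inp p (q, R, h) = (q, R, h(p := h p @ [RVal (Some (inp w))]))"
      using 2 nonempty lost reg by (simp add: protocol_def)
    moreover have "loser_history inp w (h p @ [RVal (Some (inp w))])"
      using L p(3) 2 by (intro loser_history_snoc) auto
    ultimately show ?thesis using p(3) by fastforce
  next
    case 3
    then have "step n protocol inp p (q, R, h) = (q, R, h(p := h p))"
      using nonempty lost by (simp add: protocol_def)
    with L p(3) show ?thesis by blast
  qed
qed

lemma protocol_inv_step_won:
  assumes regs: "\<forall>p\<in>spenders. h p \<noteq> [] \<longrightarrow> R p = Some (inp p)"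
    and won: "won_by inp w q h" and p: "p \<in> spenders"
  shows "protocol_inv inp (step n protocol inp p (q, R, h))"
proof -
  have w: "w \<in> spenders" "q = state_after_win w" "2 \<le> length (h w)" "h w ! 1 = RBool True"
    using won by (auto simp: won_by_def)
  consider "h p = []" | "length (h p) = 1" | "2 \<le> length (h p)"
    by (cases "length (h p) \<le> 1") (auto simp: le_Suc_eq)
  then show ?thesis
  proof cases
    case 1
    then have "p \<noteq> w" using w(3) by auto
    with won have "won_by inp w q (h(p := [RAck]))" by (auto intro: won_by_update)
    with 1 regs show ?thesis by (auto simp: protocol_Nil)
  next
    case 2
    then have pw: "p \<noteq> w" using w(3) by auto
    have "won_by inp w q (h(p := h p @ [RBool False]))"
      using won pw 2 by (intro won_by_update) (auto simp: loser_history_def nth_append)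
    with 2 w(1,2) p pw regs show ?thesis by (auto simp: protocol_token_op token_op_fails)
  next
    case 3
    show ?thesis
    proof (cases "p = w")
      case True
      with regs won 3 w(4) show ?thesis by (auto simp: protocol_winner)
    next
      case False
      have "R w = Some (inp w)" using regs w(1,3) by auto
      then obtain hp where st: "step n protocol inp p (q, R, h) = (q, R, h(p := hp))"
        and "2 \<le> length hp" "loser_history inp w hp"
        using step_loser[OF won p False 3] by blast
      then have "won_by inp w q (h(p := hp))" using won False by (auto intro: won_by_update)
      with regs 3 show ?thesis unfolding st by auto
    qed
  qed
qed

lemma protocol_inv_step:
  assumes inv: "protocol_inv inp (q, R, h)" and p: "p \<in> spenders"
  shows "protocol_inv inp (step n protocol inp p (q, R, h))"
proof -
  have regs: "\<forall>p\<in>spenders. h p \<noteq> [] \<longrightarrow> R p = Some (inp p)" using inv by simp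
  consider (initial) "q = (\<beta>, \<alpha>)" "\<forall>p\<in>spenders. length (h p) \<le> 1"
    | (won) w where "won_by inp w q h" using inv by auto
  then show ?thesis
  proof cases
    case initial
    consider "h p = []" | "length (h p) = 1" using initial(2) p by (fastforce simp: le_Suc_eq)
    then show ?thesis
    proof cases
      case 2
      have "won_by inp p (state_after_win p) (h(p := h p @ [RBool True]))"
        using initial(2) p 2 by (auto simp: won_by_def nth_append)
      moreover have "step n protocol inp p (q, R, h) = (state_after_win p, R, h(p := h p @ [RBool True]))"
        using 2 p initial(1) by (simp add: protocol_token_op token_op_succeeds)
      ultimately show ?thesis using regs 2 by auto
    qed (use initial regs in \<open>simp add: protocol_Nil\<close>)
  qed (use regs p protocol_inv_step_won in blast)
qed

lemma protocol_inv_run: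
  assumes "\<forall>t. s t \<in> spenders"
  shows "protocol_inv inp (run n protocol (\<beta>, \<alpha>) inp s t)"
proof (induction t)
  case (Suc t)
  with protocol_inv_step[of inp _ _ _ "s t"] assms show ?case
    by (cases "run n protocol (\<beta>, \<alpha>) inp s t") simp
qed simp

lemma won_by_decision:
  assumes won: "won_by inp w q h" and p: "p \<in> spenders"
    and dec: "protocol p (inp p) (h p) = Decide v"
  shows "v = inp w"
proof (cases "p = w")
  case True
  with won dec show ?thesis by (simp add: won_by_def protocol_winner)
next
  case False
  have "\<not> length (h p) \<le> 1" using dec protocol_Invoke_short[of "h p" p "inp p"] by auto
  then have "2 \<le> length (h p)" by simp
  then have L: "loser_history inp w (h p)" using won p False by (auto simp: won_by_def)
  then have lost: "h p ! 1 = RBool False" by (simp add: loser_history_def)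
  have "2 + n < length (h p)"
  proof (rule ccontr)
    assume "\<not> 2 + n < length (h p)"
    then have "\<exists>oper. protocol p (inp p) (h p) = Invoke oper"
      using protocol_Invoke_losing[of "h p" p "inp p"] \<open>2 \<le> length (h p)\<close> lost by simp
    with dec show False by simp
  qed
  with dec L lost show ?thesis by (simp add: protocol_Decide_losing loser_history_def)
qed

lemma protocol_inv_decision:
  assumes "protocol_inv inp (q, R, h)" "p \<in> spenders" "protocol p (inp p) (h p) = Decide v"
  shows "\<exists>w. won_by inp w q h"
proof -
  have "\<not> length (h p) \<le> 1" using assms(3) protocol_Invoke_short[of "h p" p "inp p"] by auto
  with assms(1,2) show ?thesis by auto
qed

lemma decision_is_winner_proposal:
  assumes sched: "\<forall>t. s t \<in> spenders" and dec: "decided n protocol (\<beta>, \<alpha>) inp s t p v"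
  shows "\<exists>w. (\<exists>t'<t. s t' = w) \<and>
    (\<forall>p' v'. decided n protocol (\<beta>, \<alpha>) inp s t p' v' \<longrightarrow> v' = inp w)"
proof -
  obtain q R h where run: "run n protocol (\<beta>, \<alpha>) inp s t = (q, R, h)"
    by (cases "run n protocol (\<beta>, \<alpha>) inp s t")
  have hist: "history n protocol (\<beta>, \<alpha>) inp s t p' = h p'" for p' by (simp add: history_def run)
  have inv: "protocol_inv inp (q, R, h)" using protocol_inv_run[OF sched, of inp t] run by simp
  have scheduled: "p' \<in> spenders" if "decided n protocol (\<beta>, \<alpha>) inp s t p' v'" for p' v'
    using that sched by (auto simp: decided_def)
  have decides: "protocol p' (inp p') (h p') = Decide v'"
    if "decided n protocol (\<beta>, \<alpha>) inp s t p' v'" for p' v'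
    using that by (simp add: decided_iff_history hist)
  obtain w where won: "won_by inp w q h"
    using protocol_inv_decision[OF inv scheduled[OF dec] decides[OF dec]] by blast
  then have "h w \<noteq> []" by (auto simp: won_by_def)
  then have "\<exists>t'<t. s t' = w"
    using history_nonempty_scheduled[of n protocol "(\<beta>, \<alpha>)" inp s t w] hist by simp
  moreover have "v' = inp w" if "decided n protocol (\<beta>, \<alpha>) inp s t p' v'" for p' v'
    using won_by_decision[OF won scheduled[OF that] decides[OF that]] .
  ultimately show ?thesis by blast
qed

theorem protocol_consensus: "consensus_impl n (\<beta>, \<alpha>) spenders protocol"
  unfolding consensus_impl_def
proof (intro allI impI conjI ballI)
  fix inp :: "nat \<Rightarrow> 'v" and s :: "nat \<Rightarrow> nat" and p
  assume "\<forall>t. s t \<in> spenders" and fair: "\<forall>m. \<exists>t\<ge>m. s t = p"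
  show "\<exists>t v. decided n protocol (\<beta>, \<alpha>) inp s t p v"
  proof (rule decides_if_bounded_history)
    fix x :: 'v and h :: "'v resp list"
    assume "3 + n \<le> length h"
    then show "\<exists>v. protocol p x h = Decide v" by (rule protocol_Decide_long)
  qed (rule fair)
next
  fix inp :: "nat \<Rightarrow> 'v" and s :: "nat \<Rightarrow> nat" and t p v
  assume sched: "\<forall>t. s t \<in> spenders" and dec: "decided n protocol (\<beta>, \<alpha>) inp s t p v"
  then obtain w where "\<exists>t'<t. s t' = w" "v = inp w"
    using decision_is_winner_proposal[OF sched dec] by blast
  with sched show "\<exists>p'\<in>spenders. (\<exists>t'<t. s t' = p') \<and> v = inp p'" by blast
next
  fix inp :: "nat \<Rightarrow> 'v" and s :: "nat \<Rightarrow> nat" and t p1 p2 v1 v2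
  assume sched: "\<forall>t. s t \<in> spenders"
    and "decided n protocol (\<beta>, \<alpha>) inp s t p1 v1 \<and> decided n protocol (\<beta>, \<alpha>) inp s t p2 v2"
  then have dec1: "decided n protocol (\<beta>, \<alpha>) inp s t p1 v1"
    and "decided n protocol (\<beta>, \<alpha>) inp s t p2 v2" by auto
  then show "v1 = v2" using decision_is_winner_proposal[OF sched dec1] by blast
qed

end

lemma consensus_impl_singleton:
  assumes "card P = 1"
  shows "consensus_impl n q P (\<lambda>p x h. Decide x)"
proof -
  obtain p0 where P: "P = {p0}" using assms card_1_singletonE by blast
  have "\<exists>t'. t' < Suc t' \<and> s t' = p" if "\<forall>m. \<exists>t\<ge>m. s t = p" for s :: "nat \<Rightarrow> nat" and p
    using that by blast
  then show ?thesis unfolding consensus_impl_def decided_def P by auto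
qed

lemma sigma_pos_balance:
  "0 < bal q a \<Longrightarrow> sigma n q a = {p. p < n \<and> (p = a \<or> 0 < allw q a p)}"
  by (simp add: sigma_def)

lemma sync_state_token_consensus:
  assumes a: "a < n" and two: "2 \<le> card (sigma n (\<beta>, \<alpha>) a)" and ut: "UT n a (\<beta>, \<alpha>)"
  shows "token_consensus n a \<beta> \<alpha>"
    and "token_consensus.spenders n a \<alpha> = sigma n (\<beta>, \<alpha>) a"
proof -
  have pos: "0 < \<beta> a" using ut by (simp add: UT_def bal_def)
  have sig: "sigma n (\<beta>, \<alpha>) a = {p. p < n \<and> (p = a \<or> 0 < \<alpha> a p)}"
    using sigma_pos_balance[of "(\<beta>, \<alpha>)" a n] pos by (simp add: bal_def allw_def)
  then have fin: "finite (sigma n (\<beta>, \<alpha>) a)" by simp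
  have "card (sigma n (\<beta>, \<alpha>) a) \<le> card {..<n}" using sig by (intro card_mono) auto
  with two have "2 \<le> n" by simp
  moreover have "\<beta> a < \<alpha> a p + \<alpha> a p'"
    if "p < n" "p' < n" "0 < \<alpha> a p" "0 < \<alpha> a p'" "p \<noteq> a" "p' \<noteq> a" "p \<noteq> p'" for p p'
  proof -
    let ?\<sigma> = "sigma n (\<beta>, \<alpha>) a"
    have "{a, p, p'} \<subseteq> ?\<sigma>" using that a sig by auto
    then have "card {a, p, p'} \<le> card ?\<sigma>" by (rule card_mono[OF fin])
    moreover have "card {a, p, p'} = 3" using that by simp
    ultimately have "\<not> card ?\<sigma> \<le> 2" by linarith
    with ut have "\<forall>pi\<in>?\<sigma> - {a}. \<forall>pj\<in>?\<sigma> - {a}. pi \<noteq> pj \<longrightarrow> \<beta> a < \<alpha> a pi + \<alpha> a pj"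
      unfolding UT_def bal_def allw_def by simp
    moreover have "p \<in> ?\<sigma> - {a}" "p' \<in> ?\<sigma> - {a}" using that sig by auto
    ultimately show ?thesis using that(7) by blast
  qed
  ultimately show loc: "token_consensus n a \<beta> \<alpha>" using a pos by unfold_locales
  show "token_consensus.spenders n a \<alpha> = sigma n (\<beta>, \<alpha>) a"
    unfolding sig by (rule token_consensus.spenders_def[OF loc])
qed

lemma sync_state_consensus:
  assumes "1 \<le> k" and "q \<in> S n k"
  shows "\<exists>P (pr :: 'v prog). P \<subseteq> {..<n} \<and> card P = k \<and> consensus_impl n q P pr"
proof -
  obtain a where a: "a < n" "card (sigma n q a) = k" "UT n a q" using assms(2) by (auto simp: S_def)
  obtain \<beta> \<alpha> where q: "q = (\<beta>, \<alpha>)" by fastforce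
  have sub: "sigma n q a \<subseteq> {..<n}" using a(1) by (auto simp: sigma_def)
  show ?thesis
  proof (cases "k = 1")
    case True
    \<comment> \<open>n may be 1, so the locale (which needs a second account) is unavailable here\<close>
    with consensus_impl_singleton a(2) sub show ?thesis by blast
  next
    case False
    with assms(1) a q have "token_consensus n a \<beta> \<alpha>"
      and spenders: "token_consensus.spenders n a \<alpha> = sigma n q a"
      using sync_state_token_consensus by auto
    then have "consensus_impl n q (sigma n q a) (token_consensus.protocol n a \<beta> \<alpha>)"
      using token_consensus.protocol_consensus q by metis
    with sub a(2) show ?thesis by blast
  qed
qed

theorem theorem2:
  fixes n k :: nat
  assumes "1 \<le> k" and "k \<le> n"
  shows "(\<forall>q \<in> S n k. \<exists>P (pr :: 'v prog).
            P \<subseteq> {..<n} \<and> card P = k \<and> consensus_impl n q P pr)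
         \<and> CN_ge TYPE('v) n (S n k) k"
  using sync_state_consensus[OF assms(1)]
  by (auto simp: CN_ge_def consensus_implementable_def)

end
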